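(* Let $E \subseteq \mathbb{R}$. Then at least one of the following holds: (1) there is $u \in \mathbb{S}$ such that the restriction of $T_u$ to $E^2$ is a quasi-isometric embedding $E^2 \to \mathbb{R}$; (2) there is a linear map $S : \mathbb{R}^4 \to \mathbb{R}$ such that $S(E^4)$ is dense in $\mathbb{R}$.
   Context: $\mathbb{S}$ is the unit circle in $\mathbb{R}^2$. For $u = (u_1,u_2) \in \mathbb{S}$, $T_u : \mathbb{R}^2 \to \mathbb{R}$ is the orthogonal projection parallel to $u$, i.e. $T_u(x) = \langle x,(u_2,-u_1)\rangle$. For $\lambda,\delta>0$, a map $f : X \to Y$ between subsets of Euclidean spaces is a $(\lambda,\delta)$-quasi-isometry if $\frac{1}{\lambda}\|x-x'\| - \delta \leq \|f(x)-f(x')\| \leq \lambda\|x-x'\| + \delta$ for all $x,x' \in X$ and every $y \in Y$ is within distance $<\delta$ of some $f(x)$; a quasi-isometry is a $(\lambda,\delta)$-quasi-isometry for some $\lambda,\delta > 0$. A map $g : X \to \mathbb{R}$ is a quasi-isometric embedding if it is a quasi-isometry $X \to g(X)$. *)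

theory Defs
  imports "HOL-Analysis.Analysis"
begin

text \<open>Projection parallel to u: T_u(x) = <x, (u_2, -u_1)>.\<close>
definition proj_par :: "real^2 \<Rightarrow> real^2 \<Rightarrow> real" where
  "proj_par u x = x $ 1 * u $ 2 - x $ 2 * u $ 1"

definition qi_map :: "real \<Rightarrow> real \<Rightarrow> ('a::metric_space \<Rightarrow> 'b::metric_space) \<Rightarrow> 'a set \<Rightarrow> 'b set \<Rightarrow> bool" where
  "qi_map l d f X Y \<longleftrightarrow>
     f ` X \<subseteq> Y \<and>
     (\<forall>x\<in>X. \<forall>x'\<in>X. dist x x' / l - d \<le> dist (f x) (f x') \<and> dist (f x) (f x') \<le> l * dist x x' + d) \<and>
     (\<forall>y\<in>Y. \<exists>x\<in>X. dist y (f x) < d)"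

definition quasi_isometry :: "('a::metric_space \<Rightarrow> 'b::metric_space) \<Rightarrow> 'a set \<Rightarrow> 'b set \<Rightarrow> bool" where
  "quasi_isometry f X Y \<longleftrightarrow> (\<exists>l>0. \<exists>d>0. qi_map l d f X Y)"

definition qi_embedding :: "('a::metric_space \<Rightarrow> real) \<Rightarrow> 'a set \<Rightarrow> bool" where
  "qi_embedding g X \<longleftrightarrow> quasi_isometry g X (g ` X)"

end

theory Submission
  imports Defs
begin

text \<open>Let D = E - E. Either there are t, e > 0 and M such that |a - t b| \<ge> e |b| for all
  a, b \<in> D with |b| > M, or every t is approximated, with arbitrarily large |b|, by quotients a / b.
  In the first case the projection of E^2 along the direction (t, 1) is a quasi-isometric embedding:
  it is 1-Lipschitz, and the transversality bound controls |a| + |b| by |a - t b| up to an additive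
  constant. In the second case, for every rational q and k, the set of t for which a - t b comes
  within 1/(k+1) of q is open and dense (solve a - t b = q with |b| large), so by Baire some t lies
  in all of them, and then {a - t b | a, b \<in> D}, the image of E^4 under a linear map, is dense.\<close>

lemma proj_par_eq_inner: "proj_par u x = x \<bullet> vector [u$2, - u$1]"
  by (simp add: proj_par_def inner_vec_def sum_2)

lemma norm_rotated_vector: "norm (vector [u$2, - u$1] :: real^2) = norm (u::real^2)"
  by (simp add: norm_vec_def L2_set_def sum_2 add.commute)

lemma abs_proj_par_le: "\<bar>proj_par u x\<bar> \<le> norm u * norm (x::real^2)"
  using Cauchy_Schwarz_ineq2[of x "vector [u$2, - u$1]"]
  by (simp add: proj_par_eq_inner norm_rotated_vector mult.commute)

lemma proj_par_diff: "proj_par u x - proj_par u y = proj_par u (x - y)"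
  by (simp add: proj_par_def algebra_simps)

lemma proj_par_scaleR: "proj_par (c *\<^sub>R u) x = c * proj_par u x"
  by (simp add: proj_par_def algebra_simps)

lemma proj_par_vector: "proj_par (vector [t, 1]) x = x$1 - t * x$2"
  by (simp add: proj_par_def)

lemma norm_le_abs_add_abs_2: "norm (x::real^2) \<le> \<bar>x$1\<bar> + \<bar>x$2\<bar>"
  using norm_le_l1_cart[of x] by (simp add: sum_2)

lemma qi_embeddingI:
  fixes f :: "'a::metric_space \<Rightarrow> real"
  assumes "l \<ge> 1" "d \<ge> 0"
    and lower: "\<And>x y. x \<in> X \<Longrightarrow> y \<in> X \<Longrightarrow> dist x y \<le> l * dist (f x) (f y) + d"
    and upper: "\<And>x y. x \<in> X \<Longrightarrow> y \<in> X \<Longrightarrow> dist (f x) (f y) \<le> l * dist x y + d"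
  shows "qi_embedding f X"
proof -
  have "dist x y / l - (d + 1) \<le> dist (f x) (f y)" if "x \<in> X" "y \<in> X" for x y
  proof -
    have "dist x y / l \<le> dist (f x) (f y) + d / l"
      using lower[OF that] \<open>l \<ge> 1\<close> by (simp add: field_simps)
    moreover have "d / l \<le> d"
      using \<open>l \<ge> 1\<close> mult_left_mono[of 1 l d] \<open>d \<ge> 0\<close> by (simp add: divide_le_eq)
    ultimately show ?thesis by linarith
  qed
  moreover have "dist (f x) (f y) \<le> l * dist x y + (d + 1)" if "x \<in> X" "y \<in> X" for x y
    using upper[OF that] by linarith
  moreover have "\<exists>x\<in>X. dist (f z) (f x) < d + 1" if "z \<in> X" for z
    using that \<open>d \<ge> 0\<close> by force
  ultimately have "qi_map l (d + 1) f X (f ` X)"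
    unfolding qi_map_def by simp
  moreover have "l > 0" "d + 1 > 0"
    using assms(1,2) by auto
  ultimately show ?thesis
    unfolding qi_embedding_def quasi_isometry_def by blast
qed

lemma abs_add_abs_le_transversal:
  fixes a b t e M :: real
  assumes "e > 0" "M \<ge> 0" and transversal: "M < \<bar>b\<bar> \<Longrightarrow> e * \<bar>b\<bar> \<le> \<bar>a - t * b\<bar>"
  shows "\<bar>a\<bar> + \<bar>b\<bar> \<le> (1 + (\<bar>t\<bar> + 1) / e) * \<bar>a - t * b\<bar> + (\<bar>t\<bar> + 1) * M"
proof -
  have "e * \<bar>b\<bar> \<le> \<bar>a - t * b\<bar> + e * M"
  proof (cases "M < \<bar>b\<bar>")
    case True
    then show ?thesis
      using transversal mult_nonneg_nonneg[of e M] \<open>e > 0\<close> \<open>M \<ge> 0\<close> by linarith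
  next
    case False
    then show ?thesis using \<open>e > 0\<close> by (simp add: add_increasing)
  qed
  then have b: "\<bar>b\<bar> \<le> \<bar>a - t * b\<bar> / e + M"
    using \<open>e > 0\<close> by (simp add: field_simps)
  have "\<bar>a\<bar> \<le> \<bar>a - t * b\<bar> + \<bar>t\<bar> * \<bar>b\<bar>"
    using abs_triangle_ineq[of "a - t * b" "t * b"] by (simp add: abs_mult)
  then have "\<bar>a\<bar> + \<bar>b\<bar> \<le> \<bar>a - t * b\<bar> + (\<bar>t\<bar> + 1) * \<bar>b\<bar>"
    by (simp add: algebra_simps)
  also have "\<dots> \<le> \<bar>a - t * b\<bar> + (\<bar>t\<bar> + 1) * (\<bar>a - t * b\<bar> / e + M)"
    using b by (intro add_left_mono mult_left_mono) auto
  finally show ?thesis by (simp add: algebra_simps)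
qed

lemma qi_embedding_proj_par:
  fixes X :: "(real^2) set"
  assumes "e > 0" "M \<ge> 0"
    and transversal: "\<And>x y. x \<in> X \<Longrightarrow> y \<in> X \<Longrightarrow> M < \<bar>x$2 - y$2\<bar> \<Longrightarrow>
                        e * \<bar>x$2 - y$2\<bar> \<le> \<bar>(x$1 - y$1) - t * (x$2 - y$2)\<bar>"
  shows "qi_embedding (proj_par (sgn (vector [t, 1]))) X"
proof -
  let ?v = "vector [t, 1] :: real^2"
  let ?f = "proj_par (sgn ?v)"
  define s where "s = norm ?v"
  define K where "K = 1 + (\<bar>t\<bar> + 1) / e"
  have "s \<ge> 1"
    using component_le_norm_cart[of ?v 2] by (simp add: s_def)
  have "K \<ge> 1"
    using \<open>e > 0\<close> by (simp add: K_def)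
  have dist_f: "dist (?f x) (?f y) = \<bar>?f (x - y)\<bar>" for x y
    by (simp add: dist_real_def proj_par_diff)
  have norm_u: "norm (sgn ?v) = 1"
  proof -
    have "?v \<noteq> 0"
      using \<open>s \<ge> 1\<close> by (auto simp: s_def)
    then show ?thesis by (simp add: norm_sgn)
  qed
  have "K * s \<ge> 1"
    using \<open>K \<ge> 1\<close> \<open>s \<ge> 1\<close> by (metis mult_mono' mult_1 zero_le_one)
  show ?thesis
  proof (rule qi_embeddingI)
    show "K * s \<ge> 1" by fact
    show "(\<bar>t\<bar> + 1) * M \<ge> 0"
      using \<open>M \<ge> 0\<close> by simp
  next
    fix x y assume "x \<in> X" "y \<in> X"
    define z where "z = x - y"
    have "dist (?f x) (?f y) = \<bar>z$1 - t * z$2\<bar> / s"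
      unfolding dist_f z_def
      by (simp add: sgn_div_norm proj_par_scaleR proj_par_vector s_def abs_mult divide_inverse_commute)
    then have proj_z: "\<bar>z$1 - t * z$2\<bar> = s * dist (?f x) (?f y)"
      using \<open>s \<ge> 1\<close> by simp
    have "dist x y \<le> \<bar>z$1\<bar> + \<bar>z$2\<bar>"
      using norm_le_abs_add_abs_2[of z] by (simp add: dist_norm z_def)
    also have "\<dots> \<le> K * \<bar>z$1 - t * z$2\<bar> + (\<bar>t\<bar> + 1) * M"
      unfolding K_def
      by (rule abs_add_abs_le_transversal)
         (use \<open>e > 0\<close> \<open>M \<ge> 0\<close> transversal[OF \<open>x \<in> X\<close> \<open>y \<in> X\<close>] in \<open>auto simp: z_def\<close>)
    finally show "dist x y \<le> K * s * dist (?f x) (?f y) + (\<bar>t\<bar> + 1) * M"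
      by (simp add: proj_z mult.assoc)
    have "dist (?f x) (?f y) \<le> dist x y"
      unfolding dist_f using abs_proj_par_le[of "sgn ?v" "x - y"] by (simp add: norm_u dist_norm)
    also have "\<dots> \<le> K * s * dist x y"
      using \<open>K * s \<ge> 1\<close> mult_right_mono[of 1 "K * s" "dist x y"] by simp
    finally show "dist (?f x) (?f y) \<le> K * s * dist x y + (\<bar>t\<bar> + 1) * M"
      using \<open>M \<ge> 0\<close> by (simp add: add_increasing2)
  qed
qed

definition approx_coeffs :: "real set \<Rightarrow> real set \<Rightarrow> real \<Rightarrow> real \<Rightarrow> real set" where
  "approx_coeffs A B q \<delta> = {t. \<exists>a\<in>A. \<exists>b\<in>B. \<bar>a - t * b - q\<bar> < \<delta>}"

lemma open_approx_coeffs: "open (approx_coeffs A B q \<delta>)"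
proof -
  have "approx_coeffs A B q \<delta> = (\<Union>a\<in>A. \<Union>b\<in>B. {t. \<bar>a - t * b - q\<bar> < \<delta>})"
    by (auto simp: approx_coeffs_def)
  then show ?thesis
    by (auto intro!: open_UN open_Collect_less continuous_intros)
qed

lemma dense_approx_coeffs:
  fixes A B :: "real set"
  assumes approx: "\<And>t e M. e > 0 \<Longrightarrow> \<exists>a\<in>A. \<exists>b\<in>B. M < \<bar>b\<bar> \<and> \<bar>a - t * b\<bar> < e * \<bar>b\<bar>"
    and "\<delta> > 0"
  shows "closure (approx_coeffs A B q \<delta>) = UNIV"
proof -
  have "t0 \<in> closure (approx_coeffs A B q \<delta>)" for t0
    unfolding closure_approachable
  proof (intro allI impI)
    fix e :: real assume "e > 0"
    then obtain a b where "a \<in> A" "b \<in> B" and large: "2 * \<bar>q\<bar> / e < \<bar>b\<bar>"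
      and close: "\<bar>a - t0 * b\<bar> < e / 2 * \<bar>b\<bar>"
      using approx[where t = t0 and e = "e / 2" and M = "2 * \<bar>q\<bar> / e"] by auto
    have "b \<noteq> 0" and q_small: "2 * \<bar>q\<bar> < e * \<bar>b\<bar>"
      using large \<open>e > 0\<close> by (auto simp: divide_less_eq mult.commute)
    define t where "t = (a - q) / b"
    have "\<bar>a - t * b - q\<bar> < \<delta>"
      using \<open>b \<noteq> 0\<close> \<open>\<delta> > 0\<close> by (simp add: t_def)
    then have "t \<in> approx_coeffs A B q \<delta>"
      using \<open>a \<in> A\<close> \<open>b \<in> B\<close> unfolding approx_coeffs_def by blast
    moreover have "\<bar>t - t0\<bar> * \<bar>b\<bar> = \<bar>(a - t0 * b) - q\<bar>"
      using \<open>b \<noteq> 0\<close> by (simp add: t_def abs_mult[symmetric] field_simps)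
    then have "\<bar>t - t0\<bar> * \<bar>b\<bar> < e * \<bar>b\<bar>"
      using close q_small abs_triangle_ineq4[of "a - t0 * b" q] by linarith
    then have "dist t t0 < e"
      by (simp add: dist_real_def mult_less_cancel_right)
    ultimately show "\<exists>t\<in>approx_coeffs A B q \<delta>. dist t t0 < e"
      by blast
  qed
  then show ?thesis by auto
qed

lemma exists_dense_combination:
  fixes A B :: "real set"
  assumes approx: "\<And>t e M. e > 0 \<Longrightarrow> \<exists>a\<in>A. \<exists>b\<in>B. M < \<bar>b\<bar> \<and> \<bar>a - t * b\<bar> < e * \<bar>b\<bar>"
  shows "\<exists>t. closure {a - t * b |a b. a \<in> A \<and> b \<in> B} = UNIV"
proof -
  define G where "G = (\<lambda>(q, k). approx_coeffs A B q (1 / Suc k)) ` (\<rat> \<times> (UNIV :: nat set))"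
  have "UNIV \<subseteq> closure (\<Inter>G)"
  proof (rule Baire)
    show "countable G"
      unfolding G_def by (intro countable_image countable_SIGMA countable_rat) auto
  next
    fix T assume "T \<in> G"
    then show "openin (top_of_set UNIV) T \<and> UNIV \<subseteq> closure T"
      unfolding G_def using open_approx_coeffs dense_approx_coeffs[OF approx] by auto
  qed simp
  then obtain t where "t \<in> \<Inter>G"
    by (metis UNIV_I closure_empty empty_iff equals0I subsetD)
  then have t: "t \<in> approx_coeffs A B q (1 / Suc k)" if "q \<in> \<rat>" for q k
    using that unfolding G_def by auto
  have "y \<in> closure {a - t * b |a b. a \<in> A \<and> b \<in> B}" for y
    unfolding closure_approachable
  proof (intro allI impI)
    fix e :: real assume "e > 0"
    then obtain q where "q \<in> \<rat>" "y < q" "q < y + e / 2"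
      using Rats_dense_in_real[of y "y + e / 2"] by auto
    obtain k :: nat where "1 / Suc k < e / 2"
      using reals_Archimedean[of "e / 2"] \<open>e > 0\<close> by (auto simp: inverse_eq_divide)
    obtain a b where "a \<in> A" "b \<in> B" "\<bar>a - t * b - q\<bar> < 1 / Suc k"
      using t[OF \<open>q \<in> \<rat>\<close>, of k] by (auto simp: approx_coeffs_def)
    then show "\<exists>x\<in>{a - t * b |a b. a \<in> A \<and> b \<in> B}. dist x y < e"
      using \<open>y < q\<close> \<open>q < y + e / 2\<close> \<open>1 / Suc k < e / 2\<close>
      by (intro bexI[of _ "a - t * b"]) (auto simp: dist_real_def)
  qed
  then show ?thesis by auto
qed

lemma image_cube_diff_combination:
  fixes E :: "real set"
  defines "D \<equiv> {x - y |x y. x \<in> E \<and> y \<in> E}"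
  shows "(\<lambda>v::real^4. (v$1 - v$2) - t * (v$3 - v$4)) ` {v. \<forall>i. v$i \<in> E}
           = {a - t * b |a b. a \<in> D \<and> b \<in> D}"
proof
  show "{a - t * b |a b. a \<in> D \<and> b \<in> D}
          \<subseteq> (\<lambda>v::real^4. (v$1 - v$2) - t * (v$3 - v$4)) ` {v. \<forall>i. v$i \<in> E}"
  proof
    fix r assume "r \<in> {a - t * b |a b. a \<in> D \<and> b \<in> D}"
    then obtain x y z w where "x \<in> E" "y \<in> E" "z \<in> E" "w \<in> E" "r = (x - y) - t * (z - w)"
      unfolding D_def by blast
    define v :: "real^4"
      where "v = (\<chi> i. if i = 1 then x else if i = 2 then y else if i = 3 then z else w)"
    have "v \<in> {v. \<forall>i. v$i \<in> E}"
      using \<open>x \<in> E\<close> \<open>y \<in> E\<close> \<open>z \<in> E\<close> \<open>w \<in> E\<close> by (simp add: v_def)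
    moreover have "(x - y) - t * (z - w) = (v$1 - v$2) - t * (v$3 - v$4)"
      by (simp add: v_def)
    ultimately show "r \<in> (\<lambda>v::real^4. (v$1 - v$2) - t * (v$3 - v$4)) ` {v. \<forall>i. v$i \<in> E}"
      using \<open>r = (x - y) - t * (z - w)\<close> by blast
  qed
qed (unfold D_def, blast)

theorem lemma3p3:
  fixes E :: "real set"
  shows "(\<exists>u::real^2. norm u = 1 \<and> qi_embedding (proj_par u) {x::real^2. \<forall>i. x $ i \<in> E})
       \<or> (\<exists>S::real^4 \<Rightarrow> real. linear S \<and> closure (S ` {x::real^4. \<forall>i. x $ i \<in> E}) = UNIV)"
proof -
  define D where "D = {x - y |x y. x \<in> E \<and> y \<in> E}"
  show ?thesis
  proof (cases "\<forall>t e M. e > 0 \<longrightarrow> (\<exists>a\<in>D. \<exists>b\<in>D. M < \<bar>b\<bar> \<and> \<bar>a - t * b\<bar> < e * \<bar>b\<bar>)")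
    case True
    then obtain t where "closure {a - t * b |a b. a \<in> D \<and> b \<in> D} = UNIV"
      using exists_dense_combination[of D D] by blast
    moreover have "linear (\<lambda>v::real^4. (v$1 - v$2) - t * (v$3 - v$4))"
      by (intro linearI) (auto simp: algebra_simps)
    ultimately show ?thesis
      using image_cube_diff_combination[where E = E and t = t] unfolding D_def by auto
  next
    case False
    then obtain t e M where "e > 0"
      and transversal: "\<And>a b. a \<in> D \<Longrightarrow> b \<in> D \<Longrightarrow> M < \<bar>b\<bar> \<Longrightarrow> e * \<bar>b\<bar> \<le> \<bar>a - t * b\<bar>"
      by (meson not_le)
    let ?v = "vector [t, 1] :: real^2"
    have "e * \<bar>x$2 - y$2\<bar> \<le> \<bar>(x$1 - y$1) - t * (x$2 - y$2)\<bar>"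
      if "\<forall>i. x $ i \<in> E" "\<forall>i. y $ i \<in> E" "max M 0 < \<bar>x$2 - y$2\<bar>" for x y :: "real^2"
      using that by (intro transversal) (auto simp: D_def)
    then have "qi_embedding (proj_par (sgn ?v)) {x::real^2. \<forall>i. x $ i \<in> E}"
      using \<open>e > 0\<close> by (intro qi_embedding_proj_par[where M = "max M 0"]) auto
    moreover have "norm (sgn ?v) = 1"
      by (metis norm_sgn vector_2(2) zero_index zero_neq_one)
    ultimately show ?thesis by blast
  qed
qed

end
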